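(* Let $N\geq3$ and let $(M,g)$ be an $N$-dimensional Riemannian model with pole $o$ and metric $ds^2=dr^2+\psi^2(r)\,d\omega^2$, where $\psi$ is a $C^\infty$ nonnegative function on $[0,+\infty)$, positive on $(0,+\infty)$, with $\psi'(0)=1$, $\psi^{(2k)}(0)=0$ for all $k\geq0$, and such that $\psi(r)=Ae^{br^{a+1}}$ for $r\geq R$, for some $R,A,b>0$ and $a\geq0$. Then for all $u\in C_c^\infty(M\setminus B_R(o))$, $$\int_M\Big(\frac{\partial u}{\partial r}\Big)^2dv_g\geq\Big(\frac{N-1}{2}\Big)^2(a+1)^2b^2\int_M r^{2a}u^2dv_g+\frac14\int_M\frac{u^2}{r^2}dv_g+\frac{2ba(a+1)(N-1)}{4}\int_M r^{a-1}u^2dv_g.$$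
   Context: $d\omega^2$ is the standard metric on $\mathbb{S}^{N-1}$, $r$ the geodesic distance from $o$, $B_R(o)$ the geodesic ball of radius $R$ centered at $o$, $\frac{\partial u}{\partial r}$ the radial derivative, $dv_g$ the Riemannian volume. *)

theory Defs
  imports "HOL-Analysis.Analysis"
begin

text \<open>C-infinity functions on R^N: differentiable everywhere, and all first partial
  derivatives again C-infinity (coinductively), i.e. partial derivatives of all orders exist.\<close>
coinductive smooth_fun :: "(real^('n::finite) \<Rightarrow> real) \<Rightarrow> bool" where
  "(\<forall>x. u differentiable (at x)) \<Longrightarrow>
   (\<forall>i. smooth_fun (\<lambda>x. frechet_derivative u (at x) (axis i 1))) \<Longrightarrow> smooth_fun u"

definition smooth_halfline_derivs :: "(nat \<Rightarrow> real \<Rightarrow> real) \<Rightarrow> (real \<Rightarrow> real) \<Rightarrow> bool" where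
  "smooth_halfline_derivs D \<psi> \<longleftrightarrow>
     (\<forall>x\<ge>0. D 0 x = \<psi> x) \<and>
     (\<forall>k. \<forall>x\<ge>0. (D k has_real_derivative D (Suc k) x) (at x within {0..}))"

text \<open>The Riemannian model with pole o and metric dr^2 + psi(r)^2 dw^2 is realised as R^N
  (normal polar coordinates at the pole o = 0): r(x) = norm x, the Riemannian volume is
  dv_g = (psi(r)/r)^(N-1) dx, and the radial derivative is the derivative along x / norm x.\<close>
definition model_density :: "(real \<Rightarrow> real) \<Rightarrow> real^('n::finite) \<Rightarrow> real" where
  "model_density \<psi> x = (\<psi> (norm x) / norm x) ^ (CARD('n) - 1)"

definition radial_deriv :: "(real^('n::finite) \<Rightarrow> real) \<Rightarrow> real^'n \<Rightarrow> real" where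
  "radial_deriv u x = frechet_derivative u (at x) (x /\<^sub>R norm x)"

definition model_integral :: "(real \<Rightarrow> real) \<Rightarrow> (real^('n::finite) \<Rightarrow> real) \<Rightarrow> real" where
  "model_integral \<psi> f = (\<integral>x. f x * model_density \<psi> x \<partial>lborel)"

end

theory Submission
  imports Defs
begin

(* In normal polar coordinates the volume of the model is \<rho>(r) dx with \<rho> = (\<psi>/r)^(N-1), and on
   the support of u, which avoids B_R(o), \<rho> is the explicit function (A e^(b r^(a+1)) / r)^(N-1).

   For a radial multiplier F put g = F \<rho> / r and k = u^2 g(|x|). The Euler identity
   \<integral> x \<bullet> \<nabla>k = -N \<integral> k, obtained by differentiating \<integral> k(t x) dx = t^(-N) \<integral> k at t = 1, says that
   e + N k integrates to zero, where e = x \<bullet> \<nabla>k. Adding it to (\<partial>_r u)^2 \<rho> completes a square: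
   (\<partial>_r u)^2 \<rho> + e + N k = \<rho> (\<partial>_r u + F u)^2 + W u^2 with
   W = (F' - F^2) \<rho> + F (\<rho>' + (N-1) \<rho> / r), so \<integral> (\<partial>_r u)^2 \<rho> \<ge> \<integral> W u^2.
   The choice F = (N-1)/2 b (a+1) r^a - 1/(2r) turns W into \<rho> times the three weights of the
   claim. *)

section \<open>Dilations and the Euler identity\<close>

lemma integrable_continuous_vanishing_outside:
  fixes f :: "'a::euclidean_space \<Rightarrow> 'b::{banach, second_countable_topology}"
  assumes "compact K" "continuous_on K f" "\<And>x. x \<notin> K \<Longrightarrow> f x = 0"
  shows "integrable lborel f"
proof -
  have "(\<lambda>x. indicator K x *\<^sub>R f x) = f"
    using assms(3) by (auto simp: indicator_def)
  then show ?thesis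
    using borel_integrable_compact[OF assms(1,2)] by simp
qed

lemma integrable_dilation:
  fixes k :: "'a::euclidean_space \<Rightarrow> real"
  assumes k_cont: "continuous_on UNIV k" and k_supp: "\<And>x. B < norm x \<Longrightarrow> k x = 0"
    and c: "c > 0"
  shows "integrable lborel (\<lambda>x. k (c *\<^sub>R x))"
proof (rule integrable_continuous_vanishing_outside[of "cball 0 (B / c)"])
  show "continuous_on (cball 0 (B / c)) (\<lambda>x. k (c *\<^sub>R x))"
    by (intro continuous_on_compose2[OF k_cont] continuous_intros) auto
  show "k (c *\<^sub>R x) = 0" if "x \<notin> cball 0 (B / c)" for x
    using that c by (intro k_supp) (auto simp: field_simps)
qed simp

lemma lborel_integral_dilation:
  fixes k :: "'a::euclidean_space \<Rightarrow> real"
  assumes "c > 0" "k \<in> borel_measurable borel"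
  shows "(\<integral>x. k (c *\<^sub>R x) \<partial>lborel) = (\<integral>x. k x \<partial>lborel) / c ^ DIM('a)"
proof -
  have "(\<integral>x. k x \<partial>lborel) = c ^ DIM('a) * (\<integral>x. k (c *\<^sub>R x) \<partial>lborel)"
    using assms by (subst lborel_affine[of c 0]) (auto simp: integral_density integral_distr)
  then show ?thesis
    using assms(1) by (simp add: field_simps)
qed

lemma DERIV_difference_quotient_sequence:
  fixes f :: "real \<Rightarrow> real"
  assumes "(f has_real_derivative f') (at x)" "h \<longlonglongrightarrow> 0" "\<And>j. h j \<noteq> 0"
  shows "(\<lambda>j. (f (x + h j) - f x) / h j) \<longlonglongrightarrow> f'"
proof -
  have "filterlim h (at 0) sequentially"
    using assms(2,3) by (intro filterlim_atI) auto
  with assms(1) show ?thesis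
    unfolding DERIV_def using filterlim_compose by blast
qed

lemma DERIV_dilation:
  fixes k :: "'a::real_normed_vector \<Rightarrow> real"
  assumes euler: "\<And>x. ((\<lambda>t. k (t *\<^sub>R x)) has_real_derivative e x) (at 1)" and "\<mu> \<noteq> 0"
  shows "((\<lambda>t. k (t *\<^sub>R x)) has_real_derivative e (\<mu> *\<^sub>R x) / \<mu>) (at \<mu>)"
proof -
  have "((\<lambda>t. k (t *\<^sub>R (\<mu> *\<^sub>R x))) has_real_derivative e (\<mu> *\<^sub>R x)) (at (\<mu> / \<mu>))"
    using euler[of "\<mu> *\<^sub>R x"] \<open>\<mu> \<noteq> 0\<close> by (simp del: scaleR_scaleR)
  moreover have "((\<lambda>t. t / \<mu>) has_real_derivative 1 / \<mu>) (at \<mu>)"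
    using \<open>\<mu> \<noteq> 0\<close> by (auto intro!: derivative_eq_intros)
  ultimately have "((\<lambda>t. k ((t / \<mu>) *\<^sub>R (\<mu> *\<^sub>R x))) has_real_derivative e (\<mu> *\<^sub>R x) * (1 / \<mu>)) (at \<mu>)"
    by (rule DERIV_chain2)
  then show ?thesis
    using \<open>\<mu> \<noteq> 0\<close> by simp
qed

lemma dilation_difference_quotient_bound:
  fixes k e :: "'a::real_normed_vector \<Rightarrow> real"
  assumes euler: "\<And>x. ((\<lambda>t. k (t *\<^sub>R x)) has_real_derivative e x) (at 1)"
    and M: "\<And>x. \<bar>e x\<bar> \<le> M" and k_supp: "\<And>x. B < norm x \<Longrightarrow> k x = 0" and h: "h > 0"
  shows "\<bar>(k ((1 + h) *\<^sub>R x) - k x) / h\<bar> \<le> M * indicator (cball 0 B) x"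
proof (cases "norm x \<le> B")
  case True
  have "\<exists>z>1. z < 1 + h \<and> k ((1 + h) *\<^sub>R x) - k (1 *\<^sub>R x) = (1 + h - 1) * (e (z *\<^sub>R x) / z)"
    by (rule MVT2) (use h DERIV_dilation[OF euler] in auto)
  then obtain z where "1 < z" "(k ((1 + h) *\<^sub>R x) - k x) / h = e (z *\<^sub>R x) / z"
    using h by auto
  moreover have "\<bar>e (z *\<^sub>R x) / z\<bar> \<le> \<bar>e (z *\<^sub>R x)\<bar>"
    using \<open>1 < z\<close> by (simp add: abs_div divide_le_eq mult_le_cancel_left1)
  ultimately show ?thesis
    using M[of "z *\<^sub>R x"] True by simp
next
  case False
  moreover have "norm x \<le> norm ((1 + h) *\<^sub>R x)"
    using h by (simp add: mult_le_cancel_right1)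
  ultimately show ?thesis
    using k_supp by simp
qed

lemma DERIV_dilation_vanishing:
  fixes k :: "'a::real_normed_vector \<Rightarrow> real"
  assumes k_supp: "\<And>x. B < norm x \<Longrightarrow> k x = 0"
    and e: "((\<lambda>t. k (t *\<^sub>R x)) has_real_derivative e) (at 1)" and x: "B < norm x"
  shows "e = 0"
proof (rule DERIV_unique[OF e])
  have "open {t. B < \<bar>t\<bar> * norm x}"
    by (intro open_Collect_less continuous_intros)
  then show "((\<lambda>t. k (t *\<^sub>R x)) has_real_derivative 0) (at 1)"
    by (rule has_field_derivative_transform_within_open[OF DERIV_const]) (use x k_supp in auto)
qed

lemma lborel_integral_dilation_quotient_tendsto:
  fixes k :: "'a::euclidean_space \<Rightarrow> real"
  assumes k_cont: "continuous_on UNIV k" and k_supp: "\<And>x. B < norm x \<Longrightarrow> k x = 0"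
    and h: "h \<longlonglongrightarrow> 0" "\<And>j. h j > 0" "\<And>j. h j \<noteq> 0"
  shows "(\<lambda>j. \<integral>x. (k ((1 + h j) *\<^sub>R x) - k x) / h j \<partial>lborel)
    \<longlonglongrightarrow> (\<integral>x. k x \<partial>lborel) * - real DIM('a)"
proof -
  have k_meas: "k \<in> borel_measurable borel"
    by (rule borel_measurable_continuous_onI[OF k_cont])
  have quotient: "(\<integral>x. (k ((1 + h j) *\<^sub>R x) - k x) / h j \<partial>lborel)
      = (\<integral>x. k x \<partial>lborel) * ((inverse (1 + h j) ^ DIM('a) - inverse 1 ^ DIM('a)) / h j)" for j
    using integrable_dilation[OF k_cont k_supp, where c = "1 + h j"]
      integrable_dilation[OF k_cont k_supp, where c = 1]
      h(2)[of j] lborel_integral_dilation[OF _ k_meas, of "1 + h j"]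
    by (simp add: field_simps)
  have "((\<lambda>t. inverse t ^ DIM('a)) has_real_derivative - real DIM('a)) (at 1)"
    by (auto intro!: derivative_eq_intros)
  from DERIV_difference_quotient_sequence[OF this h(1,3)] show ?thesis
    unfolding quotient by (rule tendsto_mult_left)
qed

lemma lborel_integral_euler_operator:
  fixes k e :: "'a::euclidean_space \<Rightarrow> real"
  assumes k_cont: "continuous_on UNIV k" and e_cont: "continuous_on UNIV e"
    and k_supp: "\<And>x. B < norm x \<Longrightarrow> k x = 0"
    and euler: "\<And>x. ((\<lambda>t. k (t *\<^sub>R x)) has_real_derivative e x) (at 1)"
  shows "(\<integral>x. e x \<partial>lborel) = - real DIM('a) * (\<integral>x. k x \<partial>lborel)"
proof -
  obtain M where M: "\<And>x. \<bar>e x\<bar> \<le> M"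
  proof -
    have "bounded (e ` cball 0 B)"
      by (intro compact_imp_bounded compact_continuous_image continuous_on_subset[OF e_cont]) auto
    then obtain M where "\<forall>y\<in>e ` cball 0 B. norm y \<le> M"
      by (auto simp: bounded_iff)
    then have "\<bar>e x\<bar> \<le> max M 0" for x
      using DERIV_dilation_vanishing[OF k_supp euler, where x = x]
      by (cases "norm x \<le> B") (auto simp: le_max_iff_disj)
    then show thesis by (rule that)
  qed
  define h :: "nat \<Rightarrow> real" where "h j = inverse (real (Suc j))" for j
  have h: "h \<longlonglongrightarrow> 0" "\<And>j. h j > 0" "\<And>j. h j \<noteq> 0"
    unfolding h_def using LIMSEQ_inverse_real_of_nat by simp_all
  define s where "s j x = (k ((1 + h j) *\<^sub>R x) - k x) / h j" for j x
  have "(\<lambda>j. \<integral>x. s j x \<partial>lborel) \<longlonglongrightarrow> (\<integral>x. e x \<partial>lborel)"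
  proof (rule integral_dominated_convergence[where w="\<lambda>x. M * indicator (cball 0 B) x"])
    show "integrable lborel (\<lambda>x. M * indicator (cball 0 B) x)"
      by (intro integrable_mult_right integrable_real_indicator)
        (use emeasure_compact_finite[OF compact_cball] in auto)
    have "continuous_on UNIV (s j)" for j
      unfolding s_def using h(3)[of j]
      by (intro continuous_intros continuous_on_compose2[OF k_cont] k_cont) auto
    then show "s j \<in> borel_measurable lborel" for j
      by (simp add: borel_measurable_continuous_onI)
    show "AE x in lborel. (\<lambda>j. s j x) \<longlonglongrightarrow> e x"
      using DERIV_difference_quotient_sequence[OF euler h(1,3)] unfolding s_def
      by (simp add: add.commute)
    show "AE x in lborel. norm (s j x) \<le> M * indicator (cball 0 B) x" for j
      unfolding s_def using dilation_difference_quotient_bound[OF euler M k_supp h(2)] by simp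
  qed (simp add: borel_measurable_continuous_onI[OF e_cont])
  moreover have "(\<lambda>j. \<integral>x. s j x \<partial>lborel) \<longlonglongrightarrow> (\<integral>x. k x \<partial>lborel) * - real DIM('a)"
    unfolding s_def using lborel_integral_dilation_quotient_tendsto[OF k_cont k_supp h] .
  ultimately show ?thesis
    using LIMSEQ_unique by (metis mult.commute)
qed

section \<open>A weighted radial Hardy inequality\<close>

lemma continuous_on_mult_radial:
  fixes f :: "'a::real_normed_vector \<Rightarrow> real"
  assumes "continuous_on UNIV f" "R > 0" "\<And>x. norm x < R \<Longrightarrow> f x = 0"
    and "continuous_on {0<..} \<phi>"
  shows "continuous_on UNIV (\<lambda>x. f x * \<phi> (norm x))"
proof -
  have "continuous_on (- {0}) (\<lambda>x. f x * \<phi> (norm x))"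
    by (intro continuous_intros continuous_on_subset[OF assms(1)]
        continuous_on_compose2[OF assms(4)]) auto
  moreover have "continuous_on (ball 0 R) (\<lambda>x. f x * \<phi> (norm x))"
    by (rule continuous_on_eq[OF continuous_on_const, of _ 0]) (use assms(3) in auto)
  ultimately have "continuous_on (- {0} \<union> ball 0 R) (\<lambda>x. f x * \<phi> (norm x))"
    by (intro continuous_on_open_Un) auto
  moreover have "- {0} \<union> ball 0 R = UNIV"
    using assms(2) by auto
  ultimately show ?thesis by metis
qed

lemma integrable_mult_radial:
  fixes f :: "'a::euclidean_space \<Rightarrow> real"
  assumes "continuous_on UNIV f" "compact S" "S \<subseteq> {x. R \<le> norm x}" "R > 0"
    and "\<And>x. x \<notin> S \<Longrightarrow> f x = 0" "continuous_on {0<..} \<phi>"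
  shows "integrable lborel (\<lambda>x. f x * \<phi> (norm x))"
proof (rule integrable_continuous_vanishing_outside[OF assms(2)])
  have "f x = 0" if "norm x < R" for x
    using assms(3,5) that by force
  then show "continuous_on S (\<lambda>x. f x * \<phi> (norm x))"
    using assms by (intro continuous_on_subset[OF continuous_on_mult_radial]) auto
qed (use assms(5) in simp)

lemma frechet_derivative_vanishing_outside:
  assumes "closed S" "{y. u y \<noteq> 0} \<subseteq> S" "x \<notin> S"
  shows "frechet_derivative u (at x) = (\<lambda>h. 0)"
proof -
  have "((\<lambda>y. 0) has_derivative (\<lambda>h. 0)) (at x)"
    by simp
  then have "(u has_derivative (\<lambda>h. 0)) (at x)"
    by (rule has_derivative_transform_within_open[where s="- S"]) (use assms in auto)
  then show ?thesis
    by (rule frechet_derivative_at[symmetric])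
qed

lemma linear_eq_sum_axis:
  fixes L :: "real^'n \<Rightarrow> real"
  assumes "linear L"
  shows "L v = (\<Sum>i\<in>UNIV. v $ i * L (axis i 1))"
proof -
  have "L v = L (\<Sum>i\<in>UNIV. v $ i *\<^sub>R axis i 1)"
    using basis_expansion[of v] by (simp add: scalar_mult_eq_scaleR)
  also have "\<dots> = (\<Sum>i\<in>UNIV. v $ i * L (axis i 1))"
    using assms by (simp add: linear_sum linear_scale o_def)
  finally show ?thesis .
qed

lemma continuous_on_frechet_derivative_self:
  fixes u :: "real^'n \<Rightarrow> real"
  assumes "\<And>x. u differentiable (at x)"
    and "\<And>i. continuous_on UNIV (\<lambda>x. frechet_derivative u (at x) (axis i 1))"
  shows "continuous_on UNIV (\<lambda>x. frechet_derivative u (at x) x)"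
proof -
  have "(\<lambda>x. frechet_derivative u (at x) x)
      = (\<lambda>x. \<Sum>i\<in>UNIV. x $ i * frechet_derivative u (at x) (axis i 1))"
    using assms(1) by (intro ext linear_eq_sum_axis linear_frechet_derivative)
  then show ?thesis
    by (simp only:) (intro continuous_intros assms(2) linear_continuous_on bounded_linear_vec_nth)
qed

lemma radial_deriv_eq:
  assumes "u differentiable (at x)"
  shows "radial_deriv u x = frechet_derivative u (at x) x / norm x"
  using linear_scale[OF linear_frechet_derivative[OF assms], of "inverse (norm x)" x]
  unfolding radial_deriv_def by (simp add: divide_inverse_commute)

lemma integrable_radial_deriv_square:
  fixes u :: "real^'n \<Rightarrow> real"
  assumes u_diff: "\<And>x. u differentiable (at x)"
    and u_C1: "\<And>i. continuous_on UNIV (\<lambda>x. frechet_derivative u (at x) (axis i 1))"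
    and S: "compact S" "S \<subseteq> {x. R \<le> norm x}" "{x. u x \<noteq> 0} \<subseteq> S"
    and R: "R > 0" and \<rho>_cont: "continuous_on {0<..} \<rho>"
  shows "integrable lborel (\<lambda>x. (radial_deriv u x)\<^sup>2 * \<rho> (norm x))"
proof -
  have "integrable lborel (\<lambda>x. (frechet_derivative u (at x) x)\<^sup>2 * (\<lambda>r. \<rho> r / r\<^sup>2) (norm x))"
    by (rule integrable_mult_radial[OF _ S(1,2) R])
      (intro continuous_intros \<rho>_cont continuous_on_frechet_derivative_self[OF u_diff u_C1]
        | simp add: frechet_derivative_vanishing_outside[OF compact_imp_closed[OF S(1)] S(3)])+
  then show ?thesis
    by (simp add: radial_deriv_eq[OF u_diff] power_divide)
qed

lemma smooth_fun_differentiable: "smooth_fun u \<Longrightarrow> u differentiable (at x)"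
  by (auto elim: smooth_fun.cases)

lemma smooth_fun_partial_derivative_continuous:
  assumes "smooth_fun u"
  shows "continuous_on UNIV (\<lambda>x. frechet_derivative u (at x) (axis i 1))"
proof -
  have "smooth_fun (\<lambda>x. frechet_derivative u (at x) (axis i 1))"
    using assms by (auto elim: smooth_fun.cases)
  then show ?thesis
    by (simp add: continuous_at_imp_continuous_on differentiable_imp_continuous_within
        smooth_fun_differentiable)
qed

lemma DERIV_dilation_square_mult_radial:
  fixes u :: "'a::real_normed_vector \<Rightarrow> real"
  assumes u: "u differentiable (at x)" and g: "(g has_real_derivative g') (at (norm x))"
  shows "((\<lambda>t. (u (t *\<^sub>R x))\<^sup>2 * g (norm (t *\<^sub>R x))) has_real_derivative
      2 * u x * frechet_derivative u (at x) x * g (norm x) + (u x)\<^sup>2 * (g' * norm x)) (at 1)"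
proof -
  have "((\<lambda>t. t *\<^sub>R x) has_derivative (\<lambda>h. h *\<^sub>R x)) (at 1)"
    by (auto intro!: derivative_eq_intros)
  moreover have "(u has_derivative frechet_derivative u (at x)) (at ((\<lambda>t. t *\<^sub>R x) 1))"
    using u by (simp add: frechet_derivative_works[symmetric])
  ultimately have
    "((\<lambda>t. u (t *\<^sub>R x)) has_derivative (\<lambda>h. frechet_derivative u (at x) (h *\<^sub>R x))) (at 1)"
    by (rule has_derivative_compose)
  moreover have "(\<lambda>h. frechet_derivative u (at x) (h *\<^sub>R x)) = (*) (frechet_derivative u (at x) x)"
    using linear_scale[OF linear_frechet_derivative[OF u]] by (simp add: fun_eq_iff)
  ultimately have du: "((\<lambda>t. u (t *\<^sub>R x)) has_real_derivative frechet_derivative u (at x) x) (at 1)"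
    by (simp add: has_field_derivative_def)
  have "(g has_real_derivative g') (at ((\<lambda>t. t * norm x) 1))"
    using g by simp
  moreover have "((\<lambda>t. t * norm x) has_real_derivative norm x) (at 1)"
    by (auto intro!: derivative_eq_intros)
  ultimately have dg: "((\<lambda>t. g (t * norm x)) has_real_derivative g' * norm x) (at 1)"
    by (rule DERIV_chain2)
  have "((\<lambda>t. (u (t *\<^sub>R x))\<^sup>2 * g (t * norm x)) has_real_derivative
      2 * u x * frechet_derivative u (at x) x * g (norm x) + (u x)\<^sup>2 * (g' * norm x)) (at 1)"
    by (auto intro!: derivative_eq_intros du dg simp: algebra_simps)
  then show ?thesis
    by (rule has_field_derivative_transform_within_open[of _ _ _ "{0<..}"]) auto
qed

lemma has_bochner_integral_radial_divergence:
  fixes u :: "real^'n \<Rightarrow> real" and g g' :: "real \<Rightarrow> real"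
  assumes u_diff: "\<And>x. u differentiable (at x)"
    and u_C1: "\<And>i. continuous_on UNIV (\<lambda>x. frechet_derivative u (at x) (axis i 1))"
    and S: "compact S" "S \<subseteq> {x. R \<le> norm x}" "{x. u x \<noteq> 0} \<subseteq> S"
    and R: "R > 0"
    and g_deriv: "\<And>r. r > 0 \<Longrightarrow> (g has_real_derivative g' r) (at r)"
    and g'_cont: "continuous_on {0<..} g'"
  shows "has_bochner_integral lborel
    (\<lambda>x. 2 * u x * frechet_derivative u (at x) x * g (norm x)
      + (u x)\<^sup>2 * (g' (norm x) * norm x + real CARD('n) * g (norm x))) 0"
proof -
  have u_outside: "u x = 0" if "x \<notin> S" for x
    using S(3) that by blast
  define k where "k x = (u x)\<^sup>2 * g (norm x)" for x
  define e where "e x = 2 * u x * frechet_derivative u (at x) x * g (norm x)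
    + (u x)\<^sup>2 * (g' (norm x) * norm x)" for x
  have outside: "k x = 0" "e x = 0" if "x \<notin> S" for x
    using that u_outside
      frechet_derivative_vanishing_outside[OF compact_imp_closed[OF S(1)] S(3)]
    unfolding k_def e_def by auto
  have near_0: "x \<notin> S" if "norm x < R" for x
    using S(2) that by force
  have u_cont: "continuous_on UNIV u"
    using u_diff by (simp add: continuous_at_imp_continuous_on differentiable_imp_continuous_within)
  have g_cont: "continuous_on {0<..} g"
    using g_deriv by (metis DERIV_isCont continuous_at_imp_continuous_on greaterThan_iff)
  have k_cont: "continuous_on UNIV k"
    unfolding k_def
    by (rule continuous_on_mult_radial[OF _ R _ g_cont])
      (intro continuous_intros u_cont | simp add: u_outside near_0)+
  have "continuous_on UNIV (\<lambda>x. (2 * u x * frechet_derivative u (at x) x) * g (norm x))"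
    by (rule continuous_on_mult_radial[OF _ R _ g_cont])
      (intro continuous_intros u_cont continuous_on_frechet_derivative_self[OF u_diff u_C1]
        | simp add: u_outside near_0)+
  moreover have "continuous_on UNIV (\<lambda>x. (u x)\<^sup>2 * (\<lambda>r. g' r * r) (norm x))"
    by (rule continuous_on_mult_radial[OF _ R])
      (intro continuous_intros u_cont g'_cont | simp add: u_outside near_0)+
  ultimately have e_cont: "continuous_on UNIV e"
    unfolding e_def by (intro continuous_on_add) simp_all
  have euler: "((\<lambda>t. k (t *\<^sub>R x)) has_real_derivative e x) (at 1)" for x
  proof (cases "x = 0")
    case True
    then show ?thesis
      using outside(2)[OF near_0[of 0]] R by simp
  next
    case False
    then show ?thesis
      unfolding k_def e_def by (intro DERIV_dilation_square_mult_radial u_diff g_deriv) auto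
  qed
  obtain B where "\<And>x. x \<in> S \<Longrightarrow> norm x \<le> B"
    using compact_imp_bounded[OF S(1)] unfolding bounded_iff by (elim exE) blast
  then have k_bounded: "k x = 0" if "B < norm x" for x
    using that outside(1)[of x] by fastforce
  have e_int: "integrable lborel e" and k_int: "integrable lborel k"
    by (intro integrable_continuous_vanishing_outside[OF S(1)] continuous_on_subset[OF e_cont]
        continuous_on_subset[OF k_cont] outside; simp)+
  have "(\<integral>x. e x \<partial>lborel) = - real CARD('n) * (\<integral>x. k x \<partial>lborel)"
    using lborel_integral_euler_operator[OF k_cont e_cont k_bounded euler] by simp
  moreover have "(\<lambda>x. 2 * u x * frechet_derivative u (at x) x * g (norm x)
      + (u x)\<^sup>2 * (g' (norm x) * norm x + real CARD('n) * g (norm x)))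
    = (\<lambda>x. e x + real CARD('n) * k x)"
    unfolding e_def k_def by (simp add: fun_eq_iff algebra_simps)
  ultimately show ?thesis
    using e_int k_int by (simp add: has_bochner_integral_iff)
qed

lemma hardy_completing_square:
  fixes r \<rho> \<rho>' F F' U D n :: real
  assumes "r > 0" "\<rho> \<ge> 0"
  shows "U\<^sup>2 * ((F' - F\<^sup>2) * \<rho> + F * (\<rho>' + (n - 1) / r * \<rho>))
    \<le> (D / r)\<^sup>2 * \<rho> + (2 * U * D * (F * \<rho> / r)
      + U\<^sup>2 * (((F' * \<rho> + F * \<rho>') / r - F * \<rho> / r\<^sup>2) * r + n * (F * \<rho> / r)))"
proof -
  have "(D / r)\<^sup>2 * \<rho> + (2 * U * D * (F * \<rho> / r)
      + U\<^sup>2 * (((F' * \<rho> + F * \<rho>') / r - F * \<rho> / r\<^sup>2) * r + n * (F * \<rho> / r)))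
      - U\<^sup>2 * ((F' - F\<^sup>2) * \<rho> + F * (\<rho>' + (n - 1) / r * \<rho>))
    = \<rho> * (D / r + U * F)\<^sup>2"
    using assms(1) by (simp add: field_simps power2_eq_square)
  moreover have "\<rho> * (D / r + U * F)\<^sup>2 \<ge> 0"
    using assms(2) by simp
  ultimately show ?thesis
    by (metis diff_ge_0_iff_ge)
qed

lemma radial_hardy_inequality:
  fixes u :: "real^'n \<Rightarrow> real" and \<rho> \<rho>' F F' W :: "real \<Rightarrow> real"
  assumes u_diff: "\<And>x. u differentiable (at x)"
    and u_C1: "\<And>i. continuous_on UNIV (\<lambda>x. frechet_derivative u (at x) (axis i 1))"
    and S: "compact S" "S \<subseteq> {x. R \<le> norm x}" "{x. u x \<noteq> 0} \<subseteq> S"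
    and R: "R > 0"
    and \<rho>_deriv: "\<And>r. r > 0 \<Longrightarrow> (\<rho> has_real_derivative \<rho>' r) (at r)"
    and \<rho>'_cont: "continuous_on {0<..} \<rho>'"
    and \<rho>_nonneg: "\<And>r. r > 0 \<Longrightarrow> \<rho> r \<ge> 0"
    and F_deriv: "\<And>r. r > 0 \<Longrightarrow> (F has_real_derivative F' r) (at r)"
    and F'_cont: "continuous_on {0<..} F'"
    and W: "\<And>r. r > 0 \<Longrightarrow>
      W r = (F' r - (F r)\<^sup>2) * \<rho> r + F r * (\<rho>' r + (real CARD('n) - 1) / r * \<rho> r)"
  shows "(\<integral>x. (u x)\<^sup>2 * W (norm x) \<partial>lborel) \<le> (\<integral>x. (radial_deriv u x)\<^sup>2 * \<rho> (norm x) \<partial>lborel)"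
proof -
  have u_outside: "u x = 0" if "x \<notin> S" for x
    using S(3) that by blast
  define Du where "Du x = frechet_derivative u (at x) x" for x
  define g where "g r = F r * \<rho> r / r" for r
  define g' where "g' r = (F' r * \<rho> r + F r * \<rho>' r) / r - F r * \<rho> r / r\<^sup>2" for r
  define divergence where "divergence x = 2 * u x * Du x * g (norm x)
    + (u x)\<^sup>2 * (g' (norm x) * norm x + real CARD('n) * g (norm x))" for x
  have \<rho>_cont: "continuous_on {0<..} \<rho>" and F_cont: "continuous_on {0<..} F"
    using \<rho>_deriv F_deriv by (metis DERIV_isCont continuous_at_imp_continuous_on greaterThan_iff)+
  have g_deriv: "(g has_real_derivative g' r) (at r)" if "r > 0" for r
    unfolding g_def[abs_def] g'_def using that
    by (auto intro!: derivative_eq_intros \<rho>_deriv F_deriv simp: power2_eq_square field_simps)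
  have g'_cont: "continuous_on {0<..} g'"
    unfolding g'_def by (intro continuous_intros \<rho>_cont \<rho>'_cont F_cont F'_cont; simp)+
  have divergence: "has_bochner_integral lborel divergence 0"
    unfolding divergence_def Du_def
    using has_bochner_integral_radial_divergence[OF u_diff u_C1 S R g_deriv g'_cont] .
  have "continuous_on {0<..}
      (\<lambda>r. (F' r - (F r)\<^sup>2) * \<rho> r + F r * (\<rho>' r + (real CARD('n) - 1) / r * \<rho> r))"
    by (intro continuous_intros \<rho>_cont \<rho>'_cont F_cont F'_cont; simp)+
  then have W_cont: "continuous_on {0<..} W"
    by (rule continuous_on_eq) (simp add: W)
  have u_cont: "continuous_on UNIV u"
    using u_diff by (simp add: continuous_at_imp_continuous_on differentiable_imp_continuous_within)
  have lhs_int: "integrable lborel (\<lambda>x. (u x)\<^sup>2 * W (norm x))"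
    by (rule integrable_mult_radial[OF _ S(1,2) R _ W_cont])
      (intro continuous_intros u_cont | simp add: u_outside)+
  have Du_outside: "Du x = 0" if "x \<notin> S" for x
    unfolding Du_def
    using frechet_derivative_vanishing_outside[OF compact_imp_closed[OF S(1)] S(3) that]
    by simp
  have rhs_int: "integrable lborel (\<lambda>x. (radial_deriv u x)\<^sup>2 * \<rho> (norm x))"
    by (rule integrable_radial_deriv_square[OF u_diff u_C1 S R \<rho>_cont])
  have "(u x)\<^sup>2 * W (norm x) \<le> (radial_deriv u x)\<^sup>2 * \<rho> (norm x) + divergence x" for x
  proof (cases "x \<in> S")
    case True
    then have "norm x > 0"
      using S(2) R by force
    then show ?thesis
      unfolding divergence_def g_def g'_def W[OF \<open>norm x > 0\<close>] radial_deriv_eq[OF u_diff]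
        Du_def[symmetric]
      by (intro hardy_completing_square \<rho>_nonneg)
  next
    case False
    then show ?thesis
      using u_outside Du_outside
      unfolding divergence_def radial_deriv_eq[OF u_diff] Du_def[symmetric] by simp
  qed
  then have "(\<integral>x. (u x)\<^sup>2 * W (norm x) \<partial>lborel)
      \<le> (\<integral>x. (radial_deriv u x)\<^sup>2 * \<rho> (norm x) + divergence x \<partial>lborel)"
    using lhs_int rhs_int integrable.intros[OF divergence] by (intro integral_mono) auto
  also have "\<dots> = (\<integral>x. (radial_deriv u x)\<^sup>2 * \<rho> (norm x) \<partial>lborel)"
    using rhs_int divergence by (simp add: has_bochner_integral_iff)
  finally show ?thesis .
qed

section \<open>The model with exponential tail\<close>

definition exp_model_density :: "real \<Rightarrow> real \<Rightarrow> real \<Rightarrow> nat \<Rightarrow> real \<Rightarrow> real" where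
  "exp_model_density A b a m r = (A * exp (b * r powr (a + 1)) / r) ^ m"

definition hardy_multiplier :: "real \<Rightarrow> real \<Rightarrow> nat \<Rightarrow> real \<Rightarrow> real" where
  "hardy_multiplier b a m r = m / 2 * b * (a + 1) * r powr a - 1 / (2 * r)"

lemma exp_model_density_deriv:
  assumes "r > 0"
  shows "(exp_model_density A b a m has_real_derivative
      exp_model_density A b a m r * (m * b * (a + 1) * r powr a - m / r)) (at r)"
proof -
  let ?\<psi> = "A * exp (b * r powr (a + 1))"
  have "(exp_model_density A b a m has_real_derivative
      m * (?\<psi> / r) ^ (m - 1) * ((?\<psi> * (b * ((a + 1) * r powr a)) * r - ?\<psi>) / r\<^sup>2)) (at r)"
    unfolding exp_model_density_def[abs_def] using assms
    by (auto intro!: derivative_eq_intros simp: power2_eq_square)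
  moreover have "m * (?\<psi> / r) ^ (m - 1) * ((?\<psi> * (b * ((a + 1) * r powr a)) * r - ?\<psi>) / r\<^sup>2)
      = (?\<psi> / r) ^ m * (m * b * (a + 1) * r powr a - m / r)"
    using assms by (cases m) (simp_all add: field_simps power2_eq_square)
  ultimately show ?thesis
    by (simp add: exp_model_density_def)
qed

lemma hardy_multiplier_deriv:
  assumes "r > 0"
  shows "(hardy_multiplier b a m has_real_derivative
      m / 2 * b * (a + 1) * a * r powr (a - 1) + 1 / (2 * r\<^sup>2)) (at r)"
  unfolding hardy_multiplier_def[abs_def] using assms
  by (auto intro!: derivative_eq_intros simp: power2_eq_square field_simps)

text \<open>With \<open>c = m b (a + 1) r\<^sup>a / 2\<close> one has \<open>F = c - 1/(2r)\<close> and \<open>\<rho>'/\<rho> + m/r = 2c\<close>, so the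
  weight is \<open>\<rho> (F' + 2 c F - F\<^sup>2) = \<rho> (F' + c\<^sup>2 - 1/(4r\<^sup>2))\<close>.\<close>
lemma exp_model_hardy_weight_eq:
  fixes A b a r :: real and m :: nat
  defines "\<rho> \<equiv> exp_model_density A b a m" and "F \<equiv> hardy_multiplier b a m"
  assumes r: "r > 0"
  shows "(m / 2 * b * (a + 1) * a * r powr (a - 1) + 1 / (2 * r\<^sup>2) - (F r)\<^sup>2) * \<rho> r
      + F r * (\<rho> r * (m * b * (a + 1) * r powr a - m / r) + m / r * \<rho> r)
    = \<rho> r * ((m / 2)\<^sup>2 * (a + 1)\<^sup>2 * b\<^sup>2 * r powr (2 * a) + 1 / (4 * r\<^sup>2)
        + 2 * b * a * (a + 1) * m / 4 * r powr (a - 1))"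
proof -
  define p where "p = r powr a"
  have "r powr (2 * a) = p * p" and "r powr (a - 1) = p / r"
    unfolding p_def using r by (simp_all add: powr_add[symmetric] powr_diff)
  then show ?thesis
    unfolding F_def hardy_multiplier_def p_def[symmetric] using r
    by (simp add: field_simps power2_eq_square)
qed

lemma exp_model_hardy_weight_inequality:
  fixes u :: "real^'n \<Rightarrow> real" and A b a R :: real
  defines "m \<equiv> CARD('n) - 1"
  defines "\<rho> \<equiv> exp_model_density A b a m"
  assumes u_diff: "\<And>x. u differentiable (at x)"
    and u_C1: "\<And>i. continuous_on UNIV (\<lambda>x. frechet_derivative u (at x) (axis i 1))"
    and S: "compact S" "S \<subseteq> {x. R \<le> norm x}" "{x. u x \<noteq> 0} \<subseteq> S"
    and R: "R > 0" and A: "A \<ge> 0"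
  shows "(\<integral>x. (u x)\<^sup>2 * (\<rho> (norm x) * ((m / 2)\<^sup>2 * (a + 1)\<^sup>2 * b\<^sup>2 * norm x powr (2 * a)
      + 1 / (4 * (norm x)\<^sup>2) + 2 * b * a * (a + 1) * m / 4 * norm x powr (a - 1))) \<partial>lborel)
    \<le> (\<integral>x. (radial_deriv u x)\<^sup>2 * \<rho> (norm x) \<partial>lborel)"
proof (rule radial_hardy_inequality[OF u_diff u_C1 S R _ _ _ hardy_multiplier_deriv])
  show \<rho>_deriv: "(\<rho> has_real_derivative \<rho> r * (m * b * (a + 1) * r powr a - m / r)) (at r)"
    if "r > 0" for r
    unfolding \<rho>_def using exp_model_density_deriv[OF that] .
  have "continuous_on {0<..} \<rho>"
    using \<rho>_deriv by (metis DERIV_isCont continuous_at_imp_continuous_on greaterThan_iff)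
  then show "continuous_on {0<..} (\<lambda>r. \<rho> r * (m * b * (a + 1) * r powr a - m / r))"
    by (intro continuous_intros; simp)+
  show "\<rho> r \<ge> 0" if "r > 0" for r
    using A that unfolding \<rho>_def exp_model_density_def by simp
  show "continuous_on {0<..} (\<lambda>r. m / 2 * b * (a + 1) * a * r powr (a - 1) + 1 / (2 * r\<^sup>2))"
    by (intro continuous_intros; simp)+
  show "\<rho> r * ((m / 2)\<^sup>2 * (a + 1)\<^sup>2 * b\<^sup>2 * r powr (2 * a) + 1 / (4 * r\<^sup>2)
        + 2 * b * a * (a + 1) * m / 4 * r powr (a - 1))
      = (m / 2 * b * (a + 1) * a * r powr (a - 1) + 1 / (2 * r\<^sup>2) - (hardy_multiplier b a m r)\<^sup>2) * \<rho> r
        + hardy_multiplier b a m r * (\<rho> r * (m * b * (a + 1) * r powr a - m / r)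
        + (real CARD('n) - 1) / r * \<rho> r)"
    if "r > 0" for r
  proof -
    have "real CARD('n) - 1 = real m"
      unfolding m_def by simp
    then show ?thesis
      using exp_model_hardy_weight_eq[OF that, where A = A and b = b and a = a and m = m]
      unfolding \<rho>_def by simp
  qed
qed

lemma exp_model_hardy_inequality:
  fixes u :: "real^'n \<Rightarrow> real" and A b a R :: real
  defines "\<rho> \<equiv> exp_model_density A b a (CARD('n) - 1)"
  assumes u_diff: "\<And>x. u differentiable (at x)"
    and u_C1: "\<And>i. continuous_on UNIV (\<lambda>x. frechet_derivative u (at x) (axis i 1))"
    and S: "compact S" "S \<subseteq> {x. R \<le> norm x}" "{x. u x \<noteq> 0} \<subseteq> S"
    and R: "R > 0" and A: "A \<ge> 0"
  shows "((real CARD('n) - 1) / 2)\<^sup>2 * (a + 1)\<^sup>2 * b\<^sup>2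
          * (\<integral>x. (norm x powr (2 * a) * (u x)\<^sup>2) * \<rho> (norm x) \<partial>lborel)
       + 1 / 4 * (\<integral>x. ((u x)\<^sup>2 / (norm x)\<^sup>2) * \<rho> (norm x) \<partial>lborel)
       + 2 * b * a * (a + 1) * (real CARD('n) - 1) / 4
          * (\<integral>x. (norm x powr (a - 1) * (u x)\<^sup>2) * \<rho> (norm x) \<partial>lborel)
     \<le> (\<integral>x. (radial_deriv u x)\<^sup>2 * \<rho> (norm x) \<partial>lborel)"
proof -
  have u_outside: "u x = 0" if "x \<notin> S" for x
    using S(3) that by blast
  define c1 where "c1 = ((real CARD('n) - 1) / 2)\<^sup>2 * (a + 1)\<^sup>2 * b\<^sup>2"
  define c3 where "c3 = 2 * b * a * (a + 1) * (real CARD('n) - 1) / 4"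
  define f1 where "f1 x = (norm x powr (2 * a) * (u x)\<^sup>2) * \<rho> (norm x)" for x
  define f2 where "f2 x = ((u x)\<^sup>2 / (norm x)\<^sup>2) * \<rho> (norm x)" for x
  define f3 where "f3 x = (norm x powr (a - 1) * (u x)\<^sup>2) * \<rho> (norm x)" for x
  have u_cont: "continuous_on UNIV u"
    using u_diff by (simp add: continuous_at_imp_continuous_on differentiable_imp_continuous_within)
  have integrable: "integrable lborel (\<lambda>x. (u x)\<^sup>2 * \<phi> (norm x))"
    if "continuous_on {0<..} \<phi>" for \<phi>
    by (rule integrable_mult_radial[OF _ S(1,2) R _ that])
      (intro continuous_intros u_cont | simp add: u_outside)+
  have "continuous_on {0<..} \<rho>"
    unfolding \<rho>_def exp_model_density_def by (intro continuous_intros; simp)+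
  then have "continuous_on {0<..} (\<lambda>r. r powr (2 * a) * \<rho> r)"
    and "continuous_on {0<..} (\<lambda>r. \<rho> r / r\<^sup>2)"
    and "continuous_on {0<..} (\<lambda>r. r powr (a - 1) * \<rho> r)"
    by (intro continuous_intros; simp)+
  from this[THEN integrable]
  have "integrable lborel f1" "integrable lborel f2" "integrable lborel f3"
    unfolding f1_def[abs_def] f2_def[abs_def] f3_def[abs_def] by (simp_all add: mult_ac)
  then have "(\<integral>x. c1 * f1 x + 1 / 4 * f2 x + c3 * f3 x \<partial>lborel)
      = c1 * (\<integral>x. f1 x \<partial>lborel) + 1 / 4 * (\<integral>x. f2 x \<partial>lborel) + c3 * (\<integral>x. f3 x \<partial>lborel)"
    by simp
  moreover have "(\<lambda>x. c1 * f1 x + 1 / 4 * f2 x + c3 * f3 x)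
      = (\<lambda>x. (u x)\<^sup>2 * (\<rho> (norm x) * (((real CARD('n) - 1) / 2)\<^sup>2 * (a + 1)\<^sup>2 * b\<^sup>2
          * norm x powr (2 * a) + 1 / (4 * (norm x)\<^sup>2)
          + 2 * b * a * (a + 1) * (real CARD('n) - 1) / 4 * norm x powr (a - 1))))"
    unfolding c1_def c3_def f1_def f2_def f3_def by (simp add: fun_eq_iff algebra_simps)
  ultimately show ?thesis
    using exp_model_hardy_weight_inequality[OF u_diff u_C1 S R A, where a = a and b = b]
    unfolding c1_def c3_def f1_def f2_def f3_def \<rho>_def by simp
qed

lemma model_integral_exp_tail:
  fixes f :: "real^'n \<Rightarrow> real"
  assumes tail: "\<forall>r\<ge>R. \<psi> r = A * exp (b * r powr (a + 1))"
    and supp: "\<And>x. f x \<noteq> 0 \<Longrightarrow> R \<le> norm x"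
  shows "model_integral \<psi> f = (\<integral>x. f x * exp_model_density A b a (CARD('n) - 1) (norm x) \<partial>lborel)"
  unfolding model_integral_def model_density_def exp_model_density_def
  by (rule Bochner_Integration.integral_cong) (use tail supp in force)+

theorem corollary3p1:
  fixes \<psi> :: "real \<Rightarrow> real" and D :: "nat \<Rightarrow> real \<Rightarrow> real"
    and R A b a :: real and u :: "real^'n \<Rightarrow> real"
  assumes N: "CARD('n) \<ge> 3"
    and psi_smooth: "smooth_halfline_derivs D \<psi>"
    and psi_nonneg: "\<forall>r\<ge>0. \<psi> r \<ge> 0"
    and psi_pos: "\<forall>r>0. \<psi> r > 0"
    and psi_d1: "D 1 0 = 1"
    and psi_even: "\<forall>k. D (2 * k) 0 = 0"
    and R: "R > 0" and A: "A > 0" and b: "b > 0" and a: "a \<ge> 0"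
    and psi_tail: "\<forall>r\<ge>R. \<psi> r = A * exp (b * r powr (a + 1))"
    and u_smooth: "smooth_fun u"
    and u_cpt: "compact (closure {x. u x \<noteq> 0})"
    and u_supp: "closure {x. u x \<noteq> 0} \<subseteq> {x. norm x \<ge> R}"
  shows "model_integral \<psi> (\<lambda>x. (radial_deriv u x)\<^sup>2)
     \<ge> ((real CARD('n) - 1) / 2)\<^sup>2 * (a + 1)\<^sup>2 * b\<^sup>2
          * model_integral \<psi> (\<lambda>x. norm x powr (2 * a) * (u x)\<^sup>2)
       + 1 / 4 * model_integral \<psi> (\<lambda>x. (u x)\<^sup>2 / (norm x)\<^sup>2)
       + 2 * b * a * (a + 1) * (real CARD('n) - 1) / 4
          * model_integral \<psi> (\<lambda>x. norm x powr (a - 1) * (u x)\<^sup>2)"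
proof -
  define S where "S = closure {x. u x \<noteq> 0}"
  have S: "compact S" "S \<subseteq> {x. R \<le> norm x}" "{x. u x \<noteq> 0} \<subseteq> S"
    using u_cpt u_supp closure_subset[of "{x. u x \<noteq> 0}"] unfolding S_def by simp_all
  have u_outside: "u x = 0" if "x \<notin> S" for x
    using S(3) that by blast
  have radial_outside: "radial_deriv u x = 0" if "x \<notin> S" for x
    using frechet_derivative_vanishing_outside[OF compact_imp_closed[OF S(1)] S(3) that]
    unfolding radial_deriv_def by simp
  have "model_integral \<psi> (\<lambda>x. (radial_deriv u x)\<^sup>2)
      = (\<integral>x. (radial_deriv u x)\<^sup>2 * exp_model_density A b a (CARD('n) - 1) (norm x) \<partial>lborel)"
    by (rule model_integral_exp_tail[OF psi_tail]) (use S(2) radial_outside in fastforce)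
  moreover have "model_integral \<psi> (\<lambda>x. f x * (u x)\<^sup>2)
      = (\<integral>x. (f x * (u x)\<^sup>2) * exp_model_density A b a (CARD('n) - 1) (norm x) \<partial>lborel)" for f
    by (rule model_integral_exp_tail[OF psi_tail]) (use S(2) u_outside in fastforce)
  moreover have "model_integral \<psi> (\<lambda>x. (u x)\<^sup>2 / (norm x)\<^sup>2)
      = (\<integral>x. ((u x)\<^sup>2 / (norm x)\<^sup>2) * exp_model_density A b a (CARD('n) - 1) (norm x) \<partial>lborel)"
    by (rule model_integral_exp_tail[OF psi_tail]) (use S(2) u_outside in fastforce)
  ultimately show ?thesis
    using exp_model_hardy_inequality[where A = A and b = b and a = a,
        OF smooth_fun_differentiable[OF u_smooth] smooth_fun_partial_derivative_continuous[OF u_smooth]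
        S R less_imp_le[OF A]]
    by (simp only:)
qed

end
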